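(* For every integer $n\ge 3$, $\chi_{ei}(W_n)=n+1$.
   Context: All graphs are finite and simple. The wheel $W_n$ is the graph on $n+1$ vertices obtained from the cycle $C_n$ by adding one new vertex adjacent to all vertices of the cycle. A path $P_4$ in $G$ is a sequence $uxyv$ of four distinct vertices with $ux,xy,yv\in E(G)$; $u,v$ are its end vertices. An $e$-injective $k$-coloring of $G$ is a function $f:V(G)\to\{1,\dots,k\}$ with $f(u)\ne f(v)$ whenever $u,v$ are the end vertices of some path $P_4$ in $G$; $\chi_{ei}(G)$ is the least such $k$. *)

theory Defs
  imports Main
begin

text \<open>A finite simple graph is given by a vertex set V and a symmetric irreflexive
  adjacency relation E (only its restriction to V matters).\<close>

definition P4_ends :: "'a set \<Rightarrow> ('a \<Rightarrow> 'a \<Rightarrow> bool) \<Rightarrow> 'a \<Rightarrow> 'a \<Rightarrow> bool" where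
  "P4_ends V E u v \<longleftrightarrow> (\<exists>x y. u \<in> V \<and> x \<in> V \<and> y \<in> V \<and> v \<in> V \<and>
      distinct [u, x, y, v] \<and> E u x \<and> E x y \<and> E y v)"

definition e_injective_coloring ::
  "'a set \<Rightarrow> ('a \<Rightarrow> 'a \<Rightarrow> bool) \<Rightarrow> nat \<Rightarrow> ('a \<Rightarrow> nat) \<Rightarrow> bool" where
  "e_injective_coloring V E k f \<longleftrightarrow>
     (\<forall>v\<in>V. f v \<in> {1..k}) \<and> (\<forall>u v. P4_ends V E u v \<longrightarrow> f u \<noteq> f v)"

definition chi_ei :: "'a set \<Rightarrow> ('a \<Rightarrow> 'a \<Rightarrow> bool) \<Rightarrow> nat" where
  "chi_ei V E = (LEAST k. \<exists>f. e_injective_coloring V E k f)"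

text \<open>The wheel W_n: cycle vertices 0..n-1 (i adjacent to (i+1) mod n), hub vertex n.\<close>

definition wheel_V :: "nat \<Rightarrow> nat set" where
  "wheel_V n = {0..n}"

definition wheel_E :: "nat \<Rightarrow> nat \<Rightarrow> nat \<Rightarrow> bool" where
  "wheel_E n u v \<longleftrightarrow> u \<noteq> v \<and> u \<le> n \<and> v \<le> n \<and>
     ((u = n \<and> v < n) \<or> (v = n \<and> u < n) \<or>
      (u < n \<and> v < n \<and> (v = (u + 1) mod n \<or> u = (v + 1) mod n)))"

end

theory Submission
  imports Defs
begin

text \<open>Any two distinct vertices of W_n (n \<ge> 3) are the end vertices of a P4: from the hub,
  jump to the rim vertex two steps after a rim vertex i and walk back to i along the rim;
  from a rim vertex i to a rim vertex j, pass through the hub and enter j from its rim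
  successor, unless that successor is i itself, in which case the roles of i and j are
  swapped. Hence an e-injective colouring of W_n is injective, and n + 1 colours suffice.\<close>

lemma P4_endsI:
  assumes "u \<in> V" "x \<in> V" "y \<in> V" "v \<in> V" "distinct [u, x, y, v]"
    and "E u x" "E x y" "E y v"
  shows "P4_ends V E u v"
  using assms unfolding P4_ends_def by blast

lemma P4_ends_sym:
  assumes "\<And>a b. E a b \<Longrightarrow> E b a" and "P4_ends V E u v"
  shows "P4_ends V E v u"
  using assms unfolding P4_ends_def by (metis distinct_rev rev.simps append.simps)

lemma e_injective_coloring_if_inj_on:
  assumes "inj_on f V" and "f ` V \<subseteq> {1..k}"
  shows "e_injective_coloring V E k f"
  using assms unfolding e_injective_coloring_def P4_ends_def inj_on_def by auto

lemma inj_on_if_e_injective_coloring: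
  assumes "\<And>u v. u \<in> V \<Longrightarrow> v \<in> V \<Longrightarrow> u \<noteq> v \<Longrightarrow> P4_ends V E u v"
    and "e_injective_coloring V E k f"
  shows "inj_on f V"
  using assms unfolding e_injective_coloring_def inj_on_def by blast

lemma chi_ei_eq_card:
  assumes "finite V"
    and "\<And>u v. u \<in> V \<Longrightarrow> v \<in> V \<Longrightarrow> u \<noteq> v \<Longrightarrow> P4_ends V E u v"
  shows "chi_ei V E = card V"
  unfolding chi_ei_def
proof (rule Least_equality)
  obtain f where "bij_betw f V {1..card V}"
    using finite_same_card_bij[of V "{1..card V}"] assms(1) by auto
  then have "e_injective_coloring V E (card V) f"
    unfolding bij_betw_def by (blast intro: e_injective_coloring_if_inj_on)
  then show "\<exists>f. e_injective_coloring V E (card V) f" by blast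
next
  fix k
  assume "\<exists>f. e_injective_coloring V E k f"
  then obtain f where f: "e_injective_coloring V E k f" ..
  have "card V \<le> card {1..k}"
  proof (rule card_inj_on_le)
    show "inj_on f V" using inj_on_if_e_injective_coloring[OF assms(2) f] .
    show "f ` V \<subseteq> {1..k}" using f unfolding e_injective_coloring_def by blast
  qed simp
  then show "card V \<le> k" by simp
qed

lemma Suc_mod_neq: "n \<ge> 2 \<Longrightarrow> i < n \<Longrightarrow> Suc i mod n \<noteq> i"
  by (auto simp: mod_Suc)

lemma Suc_Suc_mod_neq: "n \<ge> 3 \<Longrightarrow> i < n \<Longrightarrow> Suc (Suc i mod n) mod n \<noteq> i"
  by (auto simp: mod_Suc)

lemma wheel_E_sym: "wheel_E n u v \<Longrightarrow> wheel_E n v u"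
  unfolding wheel_E_def by auto

lemma wheel_P4_ends_sym:
  "P4_ends (wheel_V n) (wheel_E n) u v \<Longrightarrow> P4_ends (wheel_V n) (wheel_E n) v u"
  by (erule P4_ends_sym[rotated]) (rule wheel_E_sym)

lemma wheel_E_hub: "i < n \<Longrightarrow> wheel_E n n i"
  unfolding wheel_E_def by auto

lemma wheel_E_rim_succ: "n \<ge> 2 \<Longrightarrow> i < n \<Longrightarrow> wheel_E n i (Suc i mod n)"
  unfolding wheel_E_def by (auto simp: mod_Suc)

lemma wheel_P4_ends_hub_rim:
  assumes "n \<ge> 3" and "i < n"
  shows "P4_ends (wheel_V n) (wheel_E n) n i"
proof -
  define y where "y = Suc i mod n"
  define x where "x = Suc y mod n"
  have "n \<ge> 2" "y < n" "x < n" using assms by (simp_all add: x_def y_def)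
  have "y \<noteq> i" "x \<noteq> y" "x \<noteq> i"
    using assms \<open>n \<ge> 2\<close> \<open>y < n\<close> Suc_mod_neq Suc_Suc_mod_neq by (simp_all add: x_def y_def)
  show ?thesis
  proof (rule P4_endsI)
    show "distinct [n, x, y, i]"
      using assms(2) \<open>x < n\<close> \<open>y < n\<close> \<open>y \<noteq> i\<close> \<open>x \<noteq> y\<close> \<open>x \<noteq> i\<close> by auto
    show "wheel_E n n x" using \<open>x < n\<close> by (rule wheel_E_hub)
    show "wheel_E n x y"
      using wheel_E_rim_succ[OF \<open>n \<ge> 2\<close> \<open>y < n\<close>] unfolding x_def by (rule wheel_E_sym)
    show "wheel_E n y i"
      using wheel_E_rim_succ[OF \<open>n \<ge> 2\<close> assms(2)] unfolding y_def by (rule wheel_E_sym)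
  qed (use assms \<open>x < n\<close> \<open>y < n\<close> in \<open>auto simp: wheel_V_def\<close>)
qed

lemma wheel_P4_ends_rim_rim_succ:
  assumes "n \<ge> 3" and "i < n" and "j < n" and "i \<noteq> j" and "i \<noteq> Suc j mod n"
  shows "P4_ends (wheel_V n) (wheel_E n) i j"
proof -
  define y where "y = Suc j mod n"
  have "n \<ge> 2" "y < n" using assms by (simp_all add: y_def)
  show ?thesis
  proof (rule P4_endsI)
    have "y \<noteq> j" using Suc_mod_neq[OF \<open>n \<ge> 2\<close> assms(3)] by (simp add: y_def)
    then show "distinct [i, n, y, j]"
      using assms(2-4) assms(5)[folded y_def] \<open>y < n\<close> by auto
    show "wheel_E n i n" using wheel_E_hub[OF assms(2)] by (rule wheel_E_sym)
    show "wheel_E n n y" using \<open>y < n\<close> by (rule wheel_E_hub)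
    show "wheel_E n y j"
      using wheel_E_rim_succ[OF \<open>n \<ge> 2\<close> assms(3)] unfolding y_def by (rule wheel_E_sym)
  qed (use assms \<open>y < n\<close> in \<open>auto simp: wheel_V_def\<close>)
qed

lemma wheel_P4_ends_rim_rim:
  assumes "n \<ge> 3" and "i < n" and "j < n" and "i \<noteq> j"
  shows "P4_ends (wheel_V n) (wheel_E n) i j"
proof (cases "i = Suc j mod n")
  case True
  then have "j \<noteq> Suc i mod n" using Suc_Suc_mod_neq[OF assms(1,3)] by simp
  with assms have "P4_ends (wheel_V n) (wheel_E n) j i"
    by (intro wheel_P4_ends_rim_rim_succ) auto
  then show ?thesis by (rule wheel_P4_ends_sym)
next
  case False
  with assms show ?thesis by (rule wheel_P4_ends_rim_rim_succ)
qed

lemma wheel_P4_ends: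
  assumes "n \<ge> 3" and "u \<in> wheel_V n" and "v \<in> wheel_V n" and "u \<noteq> v"
  shows "P4_ends (wheel_V n) (wheel_E n) u v"
proof -
  consider "u = n" "v < n" | "v = n" "u < n" | "u < n" "v < n"
    using assms(2-4) unfolding wheel_V_def by fastforce
  then show ?thesis
  proof cases
    case 1
    then show ?thesis using wheel_P4_ends_hub_rim[OF assms(1)] by simp
  next
    case 2
    then show ?thesis using wheel_P4_ends_sym[OF wheel_P4_ends_hub_rim[OF assms(1)]] by simp
  next
    case 3
    then show ?thesis using wheel_P4_ends_rim_rim[OF assms(1) _ _ assms(4)] by simp
  qed
qed

theorem proposition3p4:
  fixes n :: nat
  assumes "n \<ge> 3"
  shows "chi_ei (wheel_V n) (wheel_E n) = n + 1"
proof -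
  have "chi_ei (wheel_V n) (wheel_E n) = card (wheel_V n)"
    by (rule chi_ei_eq_card[OF _ wheel_P4_ends[OF assms]]) (simp add: wheel_V_def)
  then show ?thesis by (simp add: wheel_V_def)
qed

end
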